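(* Let $\gamma\in(0,1)$ and $c\ge0$. Define the deterministic sequence $\bar v^0=0$ and, for $n\ge1$, $\bar v^n=(1-\tfrac1n)\bar v^{n-1}+\tfrac1n(c+\gamma\bar v^{n-1})$. Extend it to real arguments $x\ge0$ by linear interpolation: $\bar v(x)=\bar v^{\lfloor x\rfloor}+(x-\lfloor x\rfloor)(\bar v^{\lceil x\rceil}-\bar v^{\lfloor x\rfloor})$. Fix any real $n_0>0$ and let $$b=n_0^{1-\gamma}\Big[1-\frac{1-\gamma}{n_0\gamma}-\frac{1-\gamma}{c}\,\bar v(n_0)\Big].$$ Then for all real $n\ge n_0$, $$\bar v(n)\ \le\ \frac{c}{1-\gamma}\Big[1-b\,n^{-(1-\gamma)}-\frac{1-\gamma}{\gamma}\cdot\frac1n\Big].$$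
   Context: This concerns approximate value iteration with stepsize $1/n$ for a single-state, single-action problem with deterministic reward $c$ and discount factor $\gamma$. *)

theory Defs
  imports Complex_Main
begin

text \<open>Approximate value iteration with stepsize 1/n, single state and action,
  reward c, discount gamma: vbar^0 = 0, vbar^n = (1-1/n) vbar^(n-1) + 1/n (c + gamma vbar^(n-1)).\<close>
primrec avi_seq :: "real \<Rightarrow> real \<Rightarrow> nat \<Rightarrow> real" where
  "avi_seq c \<gamma> 0 = 0"
| "avi_seq c \<gamma> (Suc n) =
     (1 - 1 / real (Suc n)) * avi_seq c \<gamma> n + (1 / real (Suc n)) * (c + \<gamma> * avi_seq c \<gamma> n)"

definition avi_interp :: "real \<Rightarrow> real \<Rightarrow> real \<Rightarrow> real" where
  "avi_interp c \<gamma> x =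
     avi_seq c \<gamma> (nat \<lfloor>x\<rfloor>)
     + (x - of_int \<lfloor>x\<rfloor>) * (avi_seq c \<gamma> (nat \<lceil>x\<rceil>) - avi_seq c \<gamma> (nat \<lfloor>x\<rfloor>))"

end

theory Submission
  imports Defs
begin

text \<open>With \<open>V = c / (1 - \<gamma>)\<close>, the Lyapunov function
  \<open>H x = x\<^sup>1\<^sup>-\<^sup>\<gamma> (V - v x) - (c / \<gamma>) x\<^sup>-\<^sup>\<gamma>\<close> is nondecreasing on \<open>x > 0\<close>: on each
  segment \<open>[k, k + 1]\<close> the interpolant is affine with slope \<open>(1 - \<gamma>)(V - v\<^sup>k)/(k + 1)\<close>, and
  the derivative of \<open>H\<close> is \<open>x\<^sup>-\<^sup>\<gamma>\<close> times a quantity that is nonnegative because \<open>0 \<le> v\<^sup>k \<le> V\<close>.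
  The claimed bound is the inequality \<open>H n\<^sub>0 \<le> H n\<close> solved for \<open>v n\<close>.\<close>

lemma avi_seq_Suc_increment:
  assumes "\<gamma> \<noteq> 1"
  shows "avi_seq c \<gamma> (Suc k) - avi_seq c \<gamma> k
           = (1 - \<gamma>) * (c / (1 - \<gamma>) - avi_seq c \<gamma> k) / (real k + 1)"
proof -
  have "(1 - 1 / m) * v + 1 / m * (c + \<gamma> * v) - v = (1 - \<gamma>) * (c / (1 - \<gamma>) - v) / m"
    if "m \<noteq> 0" for m v :: real
    using that assms by (simp add: field_simps)
  then show ?thesis by (simp add: add.commute)
qed

lemma avi_seq_Suc_gap:
  assumes "\<gamma> \<noteq> 1"
  shows "c / (1 - \<gamma>) - avi_seq c \<gamma> (Suc k)
           = (1 - (1 - \<gamma>) / (real k + 1)) * (c / (1 - \<gamma>) - avi_seq c \<gamma> k)"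
proof -
  have "c / (1 - \<gamma>) - avi_seq c \<gamma> (Suc k) = (c / (1 - \<gamma>) - avi_seq c \<gamma> k)
          - (1 - \<gamma>) * (c / (1 - \<gamma>) - avi_seq c \<gamma> k) / (real k + 1)"
    using avi_seq_Suc_increment[OF assms, of c k] by linarith
  then show ?thesis by (simp only: left_diff_distrib mult_1_left times_divide_eq_left)
qed

lemma avi_seq_bounds:
  assumes "0 < \<gamma>" "\<gamma> < 1" "0 \<le> c"
  shows "0 \<le> avi_seq c \<gamma> k \<and> avi_seq c \<gamma> k \<le> c / (1 - \<gamma>)"
proof (induction k)
  case 0
  show ?case using assms by simp
next
  case (Suc k)
  have contraction: "0 \<le> 1 - (1 - \<gamma>) / (real k + 1)"
    using assms by (simp add: field_simps)
  have "0 \<le> avi_seq c \<gamma> (Suc k)"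
    using Suc assms by simp
  moreover have "0 \<le> c / (1 - \<gamma>) - avi_seq c \<gamma> (Suc k)"
    unfolding avi_seq_Suc_gap[OF less_imp_neq[OF assms(2)]] using Suc contraction by simp
  ultimately show ?case by simp
qed

lemma avi_interp_on_segment:
  assumes "real k \<le> x" "x \<le> real k + 1"
  shows "avi_interp c \<gamma> x
           = avi_seq c \<gamma> k + (x - real k) * (avi_seq c \<gamma> (Suc k) - avi_seq c \<gamma> k)"
proof -
  consider "x = real k" | "x = real (Suc k)" | "real k < x" "x < real (Suc k)"
    using assms by fastforce
  then show ?thesis
  proof cases
    case 1
    then show ?thesis unfolding avi_interp_def by simp
  next
    case 2
    then show ?thesis unfolding avi_interp_def
      by (simp only: floor_of_nat ceiling_of_nat nat_int) (simp del: avi_seq.simps)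
  next
    case 3
    then have "\<lfloor>x\<rfloor> = int k" "\<lceil>x\<rceil> = int k + 1"
      by (auto intro!: floor_unique ceiling_unique)
    then show ?thesis unfolding avi_interp_def by (simp add: nat_add_distrib)
  qed
qed

definition avi_lyapunov :: "real \<Rightarrow> real \<Rightarrow> real \<Rightarrow> real" where
  "avi_lyapunov c \<gamma> x = x powr (1 - \<gamma>) * (c / (1 - \<gamma>) - avi_interp c \<gamma> x) - c / \<gamma> * x powr (- \<gamma>)"

lemma avi_lyapunov_slope_nonneg:
  fixes \<gamma> c u x :: real
  assumes "0 < \<gamma>" "\<gamma> < 1" "0 \<le> c" "0 \<le> u" "u \<le> c / (1 - \<gamma>)"
    and "real k \<le> x" "x \<le> real k + 1" "0 < x"
  defines "d \<equiv> (1 - \<gamma>) * u / (real k + 1)"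
  shows "0 \<le> (1 - \<gamma>) * (u - (x - real k) * d) - x * d + c / x"
proof -
  have d_nonneg: "0 \<le> d" unfolding d_def using assms by simp
  have "x * d \<le> (real k + 1) * d" using assms d_nonneg by (intro mult_right_mono) auto
  also have "\<dots> = (1 - \<gamma>) * u" unfolding d_def by simp
  finally have first: "x * d \<le> (1 - \<gamma>) * u" .
  have "(x - real k) * d \<le> d"
    using assms d_nonneg by (intro mult_left_le_one_le) auto
  then have "(1 - \<gamma>) * ((x - real k) * d) \<le> (1 - \<gamma>) * d"
    using assms by (intro mult_left_mono) auto
  also have "\<dots> = (1 - \<gamma>) * ((1 - \<gamma>) * u) / (real k + 1)"
    unfolding d_def by simp
  also have "\<dots> \<le> (1 - \<gamma>) * (c / (1 - \<gamma>)) / (real k + 1)"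
  proof -
    have "(1 - \<gamma>) * u \<le> u" using assms by (intro mult_left_le_one_le) auto
    then show ?thesis using assms by (intro divide_right_mono mult_left_mono) auto
  qed
  also have "\<dots> = c / (real k + 1)" using assms by simp
  also have "\<dots> \<le> c / x" using assms by (intro divide_left_mono) auto
  finally have second: "(1 - \<gamma>) * ((x - real k) * d) \<le> c / x" .
  from first second show ?thesis by (simp add: algebra_simps)
qed

lemma avi_lyapunov_mono_on_segment:
  assumes "0 < \<gamma>" "\<gamma> < 1" "0 \<le> c"
    and "0 < a" "a \<le> b" "real k \<le> a" "b \<le> real k + 1"
  shows "avi_lyapunov c \<gamma> a \<le> avi_lyapunov c \<gamma> b"
proof -
  define u where "u = c / (1 - \<gamma>) - avi_seq c \<gamma> k"
  define d where "d = (1 - \<gamma>) * u / (real k + 1)"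
  define h where "h x = x powr (1 - \<gamma>) * (u - (x - real k) * d) - c / \<gamma> * x powr (- \<gamma>)" for x
  have u_bounds: "0 \<le> u" "u \<le> c / (1 - \<gamma>)"
    using avi_seq_bounds[OF assms(1-3), of k] unfolding u_def by auto
  have lyapunov_eq_h: "avi_lyapunov c \<gamma> x = h x" if "real k \<le> x" "x \<le> real k + 1" for x
    using avi_interp_on_segment[OF that, of c \<gamma>] avi_seq_Suc_increment[of \<gamma> c k] assms(2)
    unfolding avi_lyapunov_def h_def d_def u_def by simp
  have "h a \<le> h b"
  proof (rule DERIV_nonneg_imp_nondecreasing[OF \<open>a \<le> b\<close>])
    fix x assume "a \<le> x" "x \<le> b"
    with assms have x: "0 < x" "real k \<le> x" "x \<le> real k + 1" by auto
    have "(h has_real_derivative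
            (1 - \<gamma>) * x powr (1 - \<gamma> - 1) * (u - (x - real k) * d) + x powr (1 - \<gamma>) * (- d)
            - c / \<gamma> * (- \<gamma> * x powr (- \<gamma> - 1))) (at x)"
      unfolding h_def[abs_def]
      by (intro DERIV_diff DERIV_mult DERIV_cmult has_real_derivative_powr x(1))
        (auto intro!: derivative_eq_intros x(1))
    moreover have "x powr (1 - \<gamma>) = x * x powr (- \<gamma>)" "x powr (- \<gamma> - 1) = x powr (- \<gamma>) / x"
      using x(1) by (simp_all add: powr_diff powr_minus_divide)
    ultimately have "(h has_real_derivative
        x powr (- \<gamma>) * ((1 - \<gamma>) * (u - (x - real k) * d) - x * d + c / x)) (at x)"
      using assms x(1) by (simp add: field_simps)
    moreover have "0 \<le> (1 - \<gamma>) * (u - (x - real k) * d) - x * d + c / x"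
      unfolding d_def using avi_lyapunov_slope_nonneg[OF assms(1-3) u_bounds x(2,3,1)] .
    ultimately show "\<exists>y. (h has_real_derivative y) (at x) \<and> 0 \<le> y"
      by (metis mult_nonneg_nonneg powr_ge_zero)
  qed
  then show ?thesis using lyapunov_eq_h assms by simp
qed

lemma avi_lyapunov_mono:
  assumes "0 < \<gamma>" "\<gamma> < 1" "0 \<le> c" "0 < x" "x \<le> y"
  shows "avi_lyapunov c \<gamma> x \<le> avi_lyapunov c \<gamma> y"
proof -
  have "avi_lyapunov c \<gamma> x \<le> avi_lyapunov c \<gamma> y" if "x \<le> y" "y \<le> real m" for m y
    using that
  proof (induction m arbitrary: y)
    case 0
    then show ?case using \<open>0 < x\<close> by simp
  next
    case (Suc m)
    consider "y \<le> real m" | "real m \<le> x" | "x < real m" "real m < y" by linarith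
    then show ?case
    proof cases
      case 1
      then show ?thesis using Suc by blast
    next
      case 2
      then show ?thesis using Suc.prems assms avi_lyapunov_mono_on_segment[of \<gamma> c x y m] by simp
    next
      case 3
      then have "avi_lyapunov c \<gamma> x \<le> avi_lyapunov c \<gamma> (real m)" using Suc.IH by simp
      also have "\<dots> \<le> avi_lyapunov c \<gamma> y"
        using 3 Suc.prems assms avi_lyapunov_mono_on_segment[of \<gamma> c "real m" y m] by simp
      finally show ?thesis .
    qed
  qed
  then show ?thesis using assms real_nat_ceiling_ge by blast
qed

lemma avi_interp_eq_lyapunov:
  assumes "\<gamma> \<noteq> 0" "0 < x"
  shows "avi_interp c \<gamma> x
           = c / (1 - \<gamma>) - avi_lyapunov c \<gamma> x * x powr (- (1 - \<gamma>)) - c / (\<gamma> * x)"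
proof -
  have "x powr (1 - \<gamma>) * x powr (- (1 - \<gamma>)) = 1"
    using assms by (simp add: powr_add[symmetric])
  moreover have "x powr (- \<gamma>) * x powr (- (1 - \<gamma>)) = x powr (- 1)"
    by (simp add: powr_add[symmetric])
  moreover have "x powr (- 1) = 1 / x"
    using assms by (simp add: powr_minus_divide)
  ultimately show ?thesis unfolding avi_lyapunov_def using assms by (simp add: algebra_simps)
qed

theorem theorem6:
  fixes \<gamma> c n\<^sub>0 n b :: real
  assumes "0 < \<gamma>" and "\<gamma> < 1" and "0 \<le> c"
    and "0 < n\<^sub>0"
    and "b = n\<^sub>0 powr (1 - \<gamma>) *
           (1 - (1 - \<gamma>) / (n\<^sub>0 * \<gamma>) - (1 - \<gamma>) / c * avi_interp c \<gamma> n\<^sub>0)"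
    and "n\<^sub>0 \<le> n"
  shows "avi_interp c \<gamma> n \<le>
           c / (1 - \<gamma>) * (1 - b * n powr (- (1 - \<gamma>)) - (1 - \<gamma>) / \<gamma> * (1 / n))"
proof (cases "c = 0")
  case True
  then have "avi_seq c \<gamma> k = 0" for k
    using avi_seq_bounds[OF assms(1-3), of k] by simp
  with True show ?thesis by (simp add: avi_interp_def)
next
  case False
  have "n\<^sub>0 powr (1 - \<gamma>) = n\<^sub>0 * n\<^sub>0 powr (- \<gamma>)"
    using assms by (simp add: powr_diff powr_minus_divide)
  then have "c / (1 - \<gamma>) * b = avi_lyapunov c \<gamma> n\<^sub>0"
    unfolding avi_lyapunov_def assms(5) using assms False by (simp add: field_simps)
  moreover have "avi_lyapunov c \<gamma> n\<^sub>0 \<le> avi_lyapunov c \<gamma> n"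
    using avi_lyapunov_mono assms by blast
  ultimately have "c / (1 - \<gamma>) * b * n powr (- (1 - \<gamma>)) \<le> avi_lyapunov c \<gamma> n * n powr (- (1 - \<gamma>))"
    by (simp add: mult_right_mono)
  moreover have "c / (1 - \<gamma>) * (1 - b * n powr (- (1 - \<gamma>)) - (1 - \<gamma>) / \<gamma> * (1 / n))
      = c / (1 - \<gamma>) - c / (1 - \<gamma>) * b * n powr (- (1 - \<gamma>)) - c / (\<gamma> * n)"
  proof -
    have "c / (1 - \<gamma>) * ((1 - \<gamma>) / \<gamma> * (1 / n)) = c / (\<gamma> * n)" using assms(2) by simp
    then show ?thesis by (simp add: right_diff_distrib mult.assoc)
  qed
  ultimately show ?thesis
    using avi_interp_eq_lyapunov[of \<gamma> n c] assms(1,4,6) by simp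
qed

end
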